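(* Suppose $\mathcal{F}=\{X;f_\lambda\mid\lambda\in\Lambda\}$ is a minimal IFS on an infinite compact metric space $X$ and $\mathcal{F}$ has some non-periodic regularly recurrent point. If $l,n\in NM(\mathcal{F})$ and $l$ is a multiple of $n$, then $C_l$ refines $C_n$ (every element of $C_l$ is contained in some element of $C_n$).
   Context: $\Lambda$ is a finite nonempty set, $f_\lambda:X\to X$ continuous. $\Lambda^{\mathbb{Z}_+}$ is the set of sequences $\sigma=(\lambda_1,\lambda_2,\dots)$ in $\Lambda$, $\mathcal{F}_{\sigma_n}=f_{\lambda_n}\circ\cdots\circ f_{\lambda_1}$, $\mathcal{F}_{\sigma_0}=\mathrm{id}$. A nonempty closed $M\subseteq X$ is $\mathcal{F}^n$-minimal if $\mathcal{F}_{\sigma_n}(M)=M$ for all $\sigma$ and $\mathcal{F}_{\sigma_n}(A)\ne A$ for every nonempty proper $A\subsetneq M$ and every $\sigma$. $\mathcal{F}$ is minimal if the only $\mathcal{F}^1$-minimal set is $X$. $NM(\mathcal{F})$ is the set of positive integers $i$ such that some subset $M\subseteq X$ is $\mathcal{F}^i$-minimal but not $\mathcal{F}^j$-minimal for $j=1,\dots,i-1$. For $n\in NM(\mathcal{F})$, $C_n$ denotes the (unique) cover of $X$ consisting of $n$ pairwise disjoint $\mathcal{F}^n$-minimal sets. A point $x$ is regularly recurrent if for every neighborhood $U$ of $x$ there is $n\ge1$ with $\mathcal{F}_{\sigma_{ni}}(x)\in U$ for all $i\ge0$ and all $\sigma$. A point is periodic if some finite composition $f_{\lambda_n}\circ\cdots\circ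 f_{\lambda_1}$ fixes it. *)

theory Defs
  imports "HOL-Analysis.Analysis"
begin

text \<open>Iterated composition along a sequence: sigma 0 plays the role of lambda_1.
  Fcomp f sigma n = f (sigma (n-1)) o ... o f (sigma 0), Fcomp f sigma 0 = id.\<close>
fun Fcomp :: "('l \<Rightarrow> 'a \<Rightarrow> 'a) \<Rightarrow> (nat \<Rightarrow> 'l) \<Rightarrow> nat \<Rightarrow> 'a \<Rightarrow> 'a" where
  "Fcomp f \<sigma> 0 = id"
| "Fcomp f \<sigma> (Suc n) = f (\<sigma> n) \<circ> Fcomp f \<sigma> n"

definition seqs :: "'l set \<Rightarrow> (nat \<Rightarrow> 'l) set" where
  "seqs \<Lambda> = {\<sigma>. \<forall>i. \<sigma> i \<in> \<Lambda>}"

definition Fn_minimal ::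
  "'a::topological_space set \<Rightarrow> 'l set \<Rightarrow> ('l \<Rightarrow> 'a \<Rightarrow> 'a) \<Rightarrow> nat \<Rightarrow> 'a set \<Rightarrow> bool" where
  "Fn_minimal X \<Lambda> f n M \<longleftrightarrow>
     M \<subseteq> X \<and> M \<noteq> {} \<and> closed M \<and>
     (\<forall>\<sigma>\<in>seqs \<Lambda>. Fcomp f \<sigma> n ` M = M) \<and>
     (\<forall>A. closed A \<and> A \<noteq> {} \<and> A \<subset> M \<longrightarrow> (\<forall>\<sigma>\<in>seqs \<Lambda>. Fcomp f \<sigma> n ` A \<noteq> A))"

definition IFS_minimal :: "'a::topological_space set \<Rightarrow> 'l set \<Rightarrow> ('l \<Rightarrow> 'a \<Rightarrow> 'a) \<Rightarrow> bool" where
  "IFS_minimal X \<Lambda> f \<longleftrightarrow> (\<forall>M. Fn_minimal X \<Lambda> f 1 M \<longleftrightarrow> M = X)"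

definition NM :: "'a::topological_space set \<Rightarrow> 'l set \<Rightarrow> ('l \<Rightarrow> 'a \<Rightarrow> 'a) \<Rightarrow> nat set" where
  "NM X \<Lambda> f = {i. i \<ge> 1 \<and> (\<exists>M. Fn_minimal X \<Lambda> f i M \<and>
                         (\<forall>j\<in>{1..<i}. \<not> Fn_minimal X \<Lambda> f j M))}"

definition is_Cn ::
  "'a::topological_space set \<Rightarrow> 'l set \<Rightarrow> ('l \<Rightarrow> 'a \<Rightarrow> 'a) \<Rightarrow> nat \<Rightarrow> 'a set set \<Rightarrow> bool" where
  "is_Cn X \<Lambda> f n C \<longleftrightarrow> finite C \<and> card C = n \<and> \<Union>C = X \<and> disjoint C \<and>
     (\<forall>M\<in>C. Fn_minimal X \<Lambda> f n M)"

definition regularly_recurrent ::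
  "'a::topological_space set \<Rightarrow> 'l set \<Rightarrow> ('l \<Rightarrow> 'a \<Rightarrow> 'a) \<Rightarrow> 'a \<Rightarrow> bool" where
  "regularly_recurrent X \<Lambda> f x \<longleftrightarrow>
     (\<forall>U. open U \<and> x \<in> U \<longrightarrow>
        (\<exists>n\<ge>1. \<forall>i. \<forall>\<sigma>\<in>seqs \<Lambda>. Fcomp f \<sigma> (n * i) x \<in> U))"

definition periodic_pt :: "'l set \<Rightarrow> ('l \<Rightarrow> 'a \<Rightarrow> 'a) \<Rightarrow> 'a \<Rightarrow> bool" where
  "periodic_pt \<Lambda> f x \<longleftrightarrow> (\<exists>n\<ge>1. \<exists>\<sigma>\<in>seqs \<Lambda>. Fcomp f \<sigma> n x = x)"

end

theory Submission
  imports Defs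
begin

text \<open>Along the constant sequence with value \<open>c \<in> \<Lambda>\<close>, the maps \<open>\<F>\<^sub>\<sigma>\<^sub>l\<close> are iterates of the
  single map \<open>f c\<close>. Each element of \<open>C\<^sub>n\<close> is invariant under \<open>f c ^^ n\<close>, hence under
  \<open>f c ^^ l\<close>, and since \<open>C\<^sub>n\<close> partitions \<open>X\<close>, the intersection of an element \<open>A\<close> of \<open>C\<^sub>l\<close>
  with an element of \<open>C\<^sub>n\<close> that it meets is a nonempty closed \<open>f c ^^ l\<close>-invariant subset
  of \<open>A\<close>. By \<open>\<F>\<^sup>l\<close>-minimality of \<open>A\<close> it is all of \<open>A\<close>.\<close>

lemma Fcomp_const: "Fcomp f (\<lambda>_. c) m = f c ^^ m"
  by (induction m) auto

lemma image_funpow_eq_if_image_eq: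
  assumes "g ` B = B"
  shows "(g ^^ k) ` B = B"
proof (induction k)
  case (Suc k)
  then show ?case using assms by (simp only: funpow.simps(2) image_comp[symmetric])
qed simp

lemma image_Int_block_eq:
  assumes cover: "\<Union>D = X" and disj: "disjoint D"
    and blocks: "\<And>B. B \<in> D \<Longrightarrow> g ` B = B"
    and A: "A \<subseteq> X" "g ` A = A" and B: "B \<in> D"
  shows "g ` (A \<inter> B) = A \<inter> B"
proof
  show "g ` (A \<inter> B) \<subseteq> A \<inter> B" using A blocks[OF B] by blast
next
  show "A \<inter> B \<subseteq> g ` (A \<inter> B)"
  proof
    fix y assume y: "y \<in> A \<inter> B"
    then obtain x where x: "x \<in> A" "y = g x" using A by (metis IntD1 imageE)
    then obtain B' where B': "B' \<in> D" "x \<in> B'" using A cover by blast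
    then have "y \<in> B'" using blocks[OF B'(1)] x by blast
    then have "B' = B" using y disj B' B by (meson IntD2 disjointD disjoint_iff)
    then show "y \<in> g ` (A \<inter> B)" using x B' by blast
  qed
qed

lemma Fn_minimal_const_image:
  assumes "Fn_minimal X \<Lambda> f n M" and "c \<in> \<Lambda>"
  shows "(f c ^^ n) ` M = M"
proof -
  have "(\<lambda>_. c) \<in> seqs \<Lambda>" using assms(2) by (simp add: seqs_def)
  then show ?thesis using assms(1) unfolding Fn_minimal_def by (metis Fcomp_const)
qed

lemma Fn_minimal_const_subset_invariant:
  assumes min: "Fn_minimal X \<Lambda> f n A" and c: "c \<in> \<Lambda>"
    and B: "closed B" "(f c ^^ n) ` (A \<inter> B) = A \<inter> B" "A \<inter> B \<noteq> {}"
  shows "A \<subseteq> B"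
proof (rule ccontr)
  have \<sigma>: "(\<lambda>_. c) \<in> seqs \<Lambda>" using c by (simp add: seqs_def)
  assume "\<not> A \<subseteq> B"
  then have "A \<inter> B \<subset> A" by blast
  moreover have "closed (A \<inter> B)" using min B(1) by (auto simp: Fn_minimal_def)
  ultimately show False
    using min \<sigma> B(2,3) unfolding Fn_minimal_def by (metis Fcomp_const)
qed

lemma Cn_refines_if_dvd:
  assumes "\<Lambda> \<noteq> {}" and "n dvd l"
    and C: "is_Cn X \<Lambda> f l C" and D: "is_Cn X \<Lambda> f n D" and AC: "A \<in> C"
  shows "\<exists>B\<in>D. A \<subseteq> B"
proof -
  obtain c where c: "c \<in> \<Lambda>" using assms(1) by blast
  obtain k where lk: "l = n * k" using assms(2) by blast
  have Amin: "Fn_minimal X \<Lambda> f l A" using C AC by (simp add: is_Cn_def)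
  then have AX: "A \<subseteq> X" and "A \<noteq> {}" by (auto simp: Fn_minimal_def)
  then obtain a B where B: "B \<in> D" and "a \<in> A" "a \<in> B"
    using D unfolding is_Cn_def by blast
  have Dinv: "(f c ^^ l) ` B' = B'" if "B' \<in> D" for B'
  proof -
    have "Fn_minimal X \<Lambda> f n B'" using D that by (simp add: is_Cn_def)
    then show ?thesis unfolding lk funpow_mult[symmetric]
      by (rule image_funpow_eq_if_image_eq[OF Fn_minimal_const_image[OF _ c]])
  qed
  have "(f c ^^ l) ` (A \<inter> B) = A \<inter> B"
    using D Dinv AX Fn_minimal_const_image[OF Amin c] B
    by (intro image_Int_block_eq[where D = D and X = X]) (auto simp: is_Cn_def)
  moreover have "closed B" using D B by (simp add: is_Cn_def Fn_minimal_def)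
  ultimately have "A \<subseteq> B"
    using Fn_minimal_const_subset_invariant[OF Amin c] \<open>a \<in> A\<close> \<open>a \<in> B\<close> by blast
  then show ?thesis using B by blast
qed

theorem lemma4p3:
  fixes X :: "'a::metric_space set" and \<Lambda> :: "'l set" and f :: "'l \<Rightarrow> 'a \<Rightarrow> 'a"
    and l n :: nat and C D :: "'a set set"
  assumes "finite \<Lambda>" and "\<Lambda> \<noteq> {}"
    and "compact X" and "infinite X"
    and "\<And>lam. lam \<in> \<Lambda> \<Longrightarrow> continuous_on X (f lam) \<and> f lam ` X \<subseteq> X"
    and "IFS_minimal X \<Lambda> f"
    and "\<exists>x\<in>X. regularly_recurrent X \<Lambda> f x \<and> \<not> periodic_pt \<Lambda> f x"
    and "l \<in> NM X \<Lambda> f" and "n \<in> NM X \<Lambda> f" and "n dvd l"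
    and "is_Cn X \<Lambda> f l C" and "is_Cn X \<Lambda> f n D"
  shows "\<forall>A\<in>C. \<exists>B\<in>D. A \<subseteq> B"
  using Cn_refines_if_dvd[OF assms(2,10,11,12)] by blast

end
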